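(* Let $G=(V,E)$ and $G'=(V',E')$ be finite simple graphs. Then $\overline{X}_G=\overline{X}_{G'}$ if and only if the multisets $\{I_{G|_W}(t): W\subseteq V\}$ and $\{I_{G'|_{W'}}(t): W'\subseteq V'\}$ of independence polynomials of induced subgraphs (one entry per vertex subset, including the empty set) are equal.
   Context: $\overline{X}_G=\sum_\kappa\prod_{v\in V}\prod_{i\in\kappa(v)}x_i$, summed over proper set colorings $\kappa$ of $G$ (maps from $V$ to nonempty subsets of $\mathbb{Z}_{>0}$ with adjacent vertices receiving disjoint sets). For a graph $H$, its independence polynomial is $I_H(t)=\sum_{n\ge0}a_nt^n$ where $a_n$ is the number of independent sets of size $n$ in $H$. $G|_W$ is the induced subgraph on $W$. *)

theory Defs
  imports Main "HOL-Library.Multiset" "HOL-Computational_Algebra.Polynomial"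
begin

definition simple_graph :: "'a set \<Rightarrow> 'a set set \<Rightarrow> bool" where
  "simple_graph V E \<longleftrightarrow> finite V \<and>
     (\<forall>e\<in>E. \<exists>u v. u \<noteq> v \<and> u \<in> V \<and> v \<in> V \<and> e = {u, v})"

definition induced_edges :: "'a set set \<Rightarrow> 'a set \<Rightarrow> 'a set set" where
  "induced_edges E W = {e \<in> E. e \<subseteq> W}"

definition proper_set_coloring :: "'a set \<Rightarrow> 'a set set \<Rightarrow> ('a \<Rightarrow> nat set) \<Rightarrow> bool" where
  "proper_set_coloring V E \<kappa> \<longleftrightarrow>
     (\<forall>v\<in>V. \<kappa> v \<noteq> {} \<and> finite (\<kappa> v) \<and> (\<forall>i\<in>\<kappa> v. 0 < i)) \<and>
     (\<forall>v. v \<notin> V \<longrightarrow> \<kappa> v = {}) \<and>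
     (\<forall>u v. {u, v} \<in> E \<longrightarrow> \<kappa> u \<inter> \<kappa> v = {})"

text \<open>The monomial \<prod>_v \<prod>_{i\<in>\<kappa> v} x_i, encoded as a multiset of variable indices.\<close>
definition coloring_monomial :: "'a set \<Rightarrow> ('a \<Rightarrow> nat set) \<Rightarrow> nat multiset" where
  "coloring_monomial V \<kappa> = (\<Sum>v\<in>V. mset_set (\<kappa> v))"

text \<open>The set-colouring symmetric function \<overline>X_G, as a formal power series in
  x_1, x_2, ...: it is represented by its coefficient function, mapping each
  monomial (a multiset of variable indices) to its coefficient.\<close>
definition Xbar :: "'a set \<Rightarrow> 'a set set \<Rightarrow> nat multiset \<Rightarrow> nat" where
  "Xbar V E m = card {\<kappa>. proper_set_coloring V E \<kappa> \<and> coloring_monomial V \<kappa> = m}"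

definition independent_set :: "'a set \<Rightarrow> 'a set set \<Rightarrow> 'a set \<Rightarrow> bool" where
  "independent_set V E S \<longleftrightarrow> S \<subseteq> V \<and> (\<forall>u\<in>S. \<forall>v\<in>S. {u, v} \<notin> E)"

definition indep_poly :: "'a set \<Rightarrow> 'a set set \<Rightarrow> nat poly" where
  "indep_poly V E = (\<Sum>n\<le>card V. monom (card {S. independent_set V E S \<and> card S = n}) n)"

definition induced_indep_polys :: "'a set \<Rightarrow> 'a set set \<Rightarrow> nat poly multiset" where
  "induced_indep_polys V E = image_mset (\<lambda>W. indep_poly W (induced_edges E W)) (mset_set (Pow V))"

end

theory Submission
  imports Defs "HOL-Library.FuncSet"
begin

text \<open>Grouping the vertices of a proper set colouring by colour, the coefficient of x^m in
  Xbar_G counts the families (S_i) of independent sets with |S_i| = m_i that cover V. Moebius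
  inversion over the covered set turns this into the sum over W \<subseteq> V of
  (-1)^(|V| - |W|) * prod_i a_(m_i)(G|W), where a_k(H) is the k-th coefficient of I_H. Since
  |W| = a_1(G|W), each summand depends only on I_(G|W) and |V|, and |V| is determined by the
  size 2^|V| of the multiset. Conversely, the functions m \<mapsto> prod_i a_(m_i)(p) for distinct
  polynomials p with constant term 1 are linearly independent, so the signed multiplicities of
  the polynomials, and hence the multiset, can be read off Xbar_G.\<close>

definition covering_families :: "'i set \<Rightarrow> ('i \<Rightarrow> 'a set set) \<Rightarrow> 'a set \<Rightarrow> ('i \<Rightarrow> 'a set) set" where
  "covering_families C \<T> U = {S \<in> PiE C (\<lambda>i. \<T> i \<inter> Pow U). (\<Union>i\<in>C. S i) = U}"

lemma card_PiE_Pow_eq_sum_covering_families: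
  assumes "finite W" "finite C"
  shows "card (PiE C (\<lambda>i. \<T> i \<inter> Pow W)) = (\<Sum>U\<in>Pow W. card (covering_families C \<T> U))"
proof -
  let ?X = "PiE C (\<lambda>i. \<T> i \<inter> Pow W)"
  have "finite ?X" using assms by (intro finite_PiE) auto
  moreover have "(\<lambda>S. \<Union>i\<in>C. S i) ` ?X \<subseteq> Pow W" by (auto simp: PiE_def Pi_def)
  ultimately have "card ?X = (\<Sum>U\<in>Pow W. card {S \<in> ?X. (\<Union>i\<in>C. S i) = U})"
    using sum.group[of ?X "Pow W" _ "\<lambda>_. 1::nat"] assms by simp
  also have "\<dots> = (\<Sum>U\<in>Pow W. card (covering_families C \<T> U))"
    unfolding covering_families_def
    by (intro sum.cong refl arg_cong[where f=card]) (auto simp: PiE_def Pi_def)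
  finally show ?thesis .
qed

lemma card_covering_families:
  assumes "finite V" "finite C"
  shows "int (card (covering_families C \<T> V)) =
           (\<Sum>W\<in>Pow V. (-1) ^ (card V - card W) * (\<Prod>i\<in>C. int (card (\<T> i \<inter> Pow W))))"
proof -
  have "int (card (covering_families C \<T> V)) =
          (\<Sum>W\<in>Pow V. (-1) ^ (card V - card W) * int (card (PiE C (\<lambda>i. \<T> i \<inter> Pow W))))"
    by (rule inclusion_exclusion_mobius)
      (use assms card_PiE_Pow_eq_sum_covering_families in \<open>simp_all flip: of_nat_sum\<close>)
  then show ?thesis using assms(2) by (simp add: card_PiE)
qed

lemma count_coloring_monomial:
  assumes "finite V" "\<forall>v\<in>V. finite (\<kappa> v)"
  shows "count (coloring_monomial V \<kappa>) i = card {v\<in>V. i \<in> \<kappa> v}"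
  using assms unfolding coloring_monomial_def count_sum
  by (simp add: count_mset_set' sum.If_cases Int_def)

lemma card_color_class:
  assumes "finite V" "proper_set_coloring V E \<kappa>"
  shows "card {v\<in>V. i \<in> \<kappa> v} = count (coloring_monomial V \<kappa>) i"
  using assms count_coloring_monomial[of V \<kappa> i] by (simp add: proper_set_coloring_def)

lemma set_mset_coloring_monomial:
  assumes "finite V" "proper_set_coloring V E \<kappa>"
  shows "set_mset (coloring_monomial V \<kappa>) = (\<Union>v\<in>V. \<kappa> v)"
proof -
  have "i \<in># coloring_monomial V \<kappa> \<longleftrightarrow> card {v\<in>V. i \<in> \<kappa> v} \<noteq> 0" for i
    using card_color_class[OF assms, of i] by (simp add: count_eq_zero_iff[symmetric])
  also have "card {v\<in>V. i \<in> \<kappa> v} \<noteq> 0 \<longleftrightarrow> i \<in> (\<Union>v\<in>V. \<kappa> v)" for i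
    using assms(1) by auto
  finally show ?thesis by blast
qed

lemma colors_subset_coloring_monomial:
  assumes "finite V" "proper_set_coloring V E \<kappa>"
  shows "\<kappa> v \<subseteq> set_mset (coloring_monomial V \<kappa>)"
proof (cases "v \<in> V")
  case False
  with assms(2) show ?thesis by (simp add: proper_set_coloring_def)
qed (auto simp: set_mset_coloring_monomial[OF assms])

lemma Xbar_eq_0_if_color_0:
  assumes "finite V" "0 \<in># m"
  shows "Xbar V E m = 0"
proof -
  have "0 \<notin># coloring_monomial V \<kappa>" if "proper_set_coloring V E \<kappa>" for \<kappa>
    using that unfolding set_mset_coloring_monomial[OF assms(1) that] proper_set_coloring_def
    by blast
  with assms(2) have "{\<kappa>. proper_set_coloring V E \<kappa> \<and> coloring_monomial V \<kappa> = m} = {}" by blast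
  then show ?thesis unfolding Xbar_def by (simp only: card.empty)
qed

abbreviation indep_sets_of_size :: "'a set \<Rightarrow> 'a set set \<Rightarrow> nat \<Rightarrow> 'a set set" where
  "indep_sets_of_size V E k \<equiv> {T. independent_set V E T \<and> card T = k}"

abbreviation independent_covers :: "'a set \<Rightarrow> 'a set set \<Rightarrow> nat multiset \<Rightarrow> (nat \<Rightarrow> 'a set) set" where
  "independent_covers V E m \<equiv>
     covering_families (set_mset m) (\<lambda>i. indep_sets_of_size V E (count m i)) V"

definition color_classes :: "'a set \<Rightarrow> nat set \<Rightarrow> ('a \<Rightarrow> nat set) \<Rightarrow> nat \<Rightarrow> 'a set" where
  "color_classes V C \<kappa> = (\<lambda>i\<in>C. {v\<in>V. i \<in> \<kappa> v})"

definition coloring_of_classes :: "'a set \<Rightarrow> nat set \<Rightarrow> (nat \<Rightarrow> 'a set) \<Rightarrow> 'a \<Rightarrow> nat set" where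
  "coloring_of_classes V C S = (\<lambda>v. if v \<in> V then {i\<in>C. v \<in> S i} else {})"

lemma color_classes_in_independent_covers:
  assumes fin: "finite V" and \<kappa>: "proper_set_coloring V E \<kappa>"
    and m: "coloring_monomial V \<kappa> = m"
  shows "color_classes V (set_mset m) \<kappa> \<in> independent_covers V E m"
proof -
  have "independent_set V E {v\<in>V. i \<in> \<kappa> v}" for i
    using \<kappa> unfolding independent_set_def proper_set_coloring_def by blast
  moreover have "V \<subseteq> (\<Union>i\<in>set_mset m. {v\<in>V. i \<in> \<kappa> v})"
  proof
    fix v assume "v \<in> V"
    with \<kappa> have "\<kappa> v \<noteq> {}" by (simp add: proper_set_coloring_def)
    then obtain i where "i \<in> \<kappa> v" by blast
    with \<open>v \<in> V\<close> colors_subset_coloring_monomial[OF fin \<kappa>, of v] m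
    show "v \<in> (\<Union>i\<in>set_mset m. {v\<in>V. i \<in> \<kappa> v})" by auto
  qed
  ultimately show ?thesis
    using card_color_class[OF fin \<kappa>] m
    by (auto simp: color_classes_def covering_families_def)
qed

lemma coloring_of_classes_proper:
  assumes fin: "finite V" and m0: "0 \<notin># m" and S: "S \<in> independent_covers V E m"
  shows "proper_set_coloring V E (coloring_of_classes V (set_mset m) S)"
    and "coloring_monomial V (coloring_of_classes V (set_mset m) S) = m"
proof -
  let ?\<kappa> = "coloring_of_classes V (set_mset m) S"
  have indep: "independent_set V E (S i)" and card: "card (S i) = count m i" if "i \<in># m" for i
    using S that by (auto simp: covering_families_def)
  have cover: "V = (\<Union>i\<in>set_mset m. S i)" using S by (simp add: covering_families_def)
  show "proper_set_coloring V E ?\<kappa>"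
    unfolding proper_set_coloring_def
  proof (intro conjI ballI allI impI)
    show "?\<kappa> v \<noteq> {}" if "v \<in> V" for v
      using that cover by (auto simp: coloring_of_classes_def)
    show "0 < i" if "i \<in> ?\<kappa> v" for v i
    proof -
      have "i \<in># m" using that by (simp add: coloring_of_classes_def split: if_splits)
      with m0 show ?thesis by (metis gr0I)
    qed
    show "?\<kappa> u \<inter> ?\<kappa> v = {}" if "{u, v} \<in> E" for u v
    proof (rule ccontr)
      assume "?\<kappa> u \<inter> ?\<kappa> v \<noteq> {}"
      then obtain i where "i \<in># m" "u \<in> S i" "v \<in> S i"
        by (auto simp: coloring_of_classes_def split: if_splits)
      with indep that show False by (auto simp: independent_set_def)
    qed
  qed (auto simp: coloring_of_classes_def)
  show "coloring_monomial V ?\<kappa> = m"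
  proof (rule multiset_eqI)
    fix i
    have "{v\<in>V. i \<in> ?\<kappa> v} = (if i \<in># m then S i else {})"
      using cover by (auto simp: coloring_of_classes_def)
    then show "count (coloring_monomial V ?\<kappa>) i = count m i"
      using count_coloring_monomial[OF fin, of ?\<kappa> i] card
      by (simp add: coloring_of_classes_def not_in_iff)
  qed
qed

lemma Xbar_eq_card_independent_covers:
  assumes fin: "finite V" and m0: "0 \<notin># m"
  shows "Xbar V E m = card (independent_covers V E m)"
proof -
  let ?P = "{\<kappa>. proper_set_coloring V E \<kappa> \<and> coloring_monomial V \<kappa> = m}"
  have "coloring_of_classes V (set_mset m) (color_classes V (set_mset m) \<kappa>) v = \<kappa> v"
    if "\<kappa> \<in> ?P" for \<kappa> v
    using colors_subset_coloring_monomial[OF fin, of E \<kappa> v] that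
    by (auto simp: color_classes_def coloring_of_classes_def proper_set_coloring_def)
  moreover have "color_classes V (set_mset m) (coloring_of_classes V (set_mset m) S) i = S i"
    if "S \<in> independent_covers V E m" for S i
    using that
    by (auto simp: color_classes_def coloring_of_classes_def covering_families_def PiE_def extensional_def)
  ultimately have "bij_betw (color_classes V (set_mset m)) ?P (independent_covers V E m)"
    using color_classes_in_independent_covers[OF fin] coloring_of_classes_proper[OF fin m0]
    by (intro bij_betwI[where g = "coloring_of_classes V (set_mset m)"]) (auto intro: ext)
  then show ?thesis unfolding Xbar_def by (rule bij_betw_same_card)
qed

lemma coeff_indep_poly:
  assumes "finite W"
  shows "coeff (indep_poly W F) k = card (indep_sets_of_size W F k)"
proof (cases "k \<le> card W")
  case False
  with assms have empty: "indep_sets_of_size W F k = {}"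
    by (auto simp: independent_set_def dest: card_mono)
  from False show ?thesis by (simp add: indep_poly_def coeff_sum coeff_monom empty)
qed (simp add: indep_poly_def coeff_sum coeff_monom)

lemma coeff_indep_poly_0:
  assumes "finite W"
  shows "coeff (indep_poly W F) 0 = 1"
proof -
  have "indep_sets_of_size W F 0 = {{}}"
    using assms by (auto simp: independent_set_def) (metis card_0_eq empty_iff rev_finite_subset)
  then show ?thesis by (simp add: coeff_indep_poly[OF assms])
qed

lemma coeff_indep_poly_1:
  assumes "finite W" "\<And>v. {v} \<notin> F"
  shows "coeff (indep_poly W F) 1 = card W"
proof -
  have "indep_sets_of_size W F 1 = (\<lambda>v. {v}) ` W"
    using assms by (auto simp: independent_set_def card_1_singleton_iff)
  then show ?thesis by (simp add: coeff_indep_poly[OF assms(1)] card_image)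
qed

lemma simple_graph_singleton_notin_edges:
  assumes "simple_graph V E"
  shows "{v} \<notin> E"
proof
  assume "{v} \<in> E"
  with assms obtain a b where "a \<noteq> b" "{v} = {a, b}" by (auto simp: simple_graph_def)
  then show False by (metis insertCI singletonD)
qed

lemma indep_sets_of_size_induced:
  assumes "W \<subseteq> V"
  shows "indep_sets_of_size V E k \<inter> Pow W = indep_sets_of_size W (induced_edges E W) k"
  using assms unfolding independent_set_def induced_edges_def by blast

definition multiplicity_prod :: "(nat \<Rightarrow> 'a::comm_monoid_mult) \<Rightarrow> nat multiset \<Rightarrow> 'a" where
  "multiplicity_prod f m = (\<Prod>i\<in>set_mset m. f (count m i))"

lemma multiplicity_prod_add_fresh:
  assumes "k > 0" "j \<notin># m"
  shows "multiplicity_prod f (m + replicate_mset k j) = f k * multiplicity_prod f m"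
proof -
  have "set_mset (m + replicate_mset k j) = insert j (set_mset m)" using assms(1) by auto
  moreover have "count (m + replicate_mset k j) i = count m i" if "i \<in># m" for i
    using assms(2) that by auto
  ultimately show ?thesis
    using assms(2) by (simp add: multiplicity_prod_def not_in_iff cong: prod.cong)
qed

text \<open>Adding a fresh colour of multiplicity k multiplies the p-th term by c p k, so the
  vanishing of the sums survives multiplying each p-th term by c p k - a.\<close>

lemma sum_multiplicity_prod_filter_eq_0:
  fixes c :: "'b \<Rightarrow> nat \<Rightarrow> 'a::comm_ring_1"
  assumes "finite Q" "\<forall>q\<in>Q. k q > 0"
    and zero: "\<And>m. 0 \<notin># m \<Longrightarrow> (\<Sum>p\<in>D. w p * multiplicity_prod (c p) m) = 0"
    and "0 \<notin># m"
  shows "(\<Sum>p\<in>D. w p * multiplicity_prod (c p) m * (\<Prod>q\<in>Q. c p (k q) - a q)) = 0"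
  using assms(1,2,4)
proof (induction Q arbitrary: m rule: finite_induct)
  case empty
  then show ?case using zero by simp
next
  case (insert q Q)
  let ?R = "\<lambda>p. \<Prod>q\<in>Q. c p (k q) - a q"
  obtain j where j: "j \<notin> insert 0 (set_mset m)"
    using ex_new_if_finite[OF infinite_UNIV_nat] by blast
  let ?m' = "m + replicate_mset (k q) j"
  have "0 \<notin># ?m'" using insert.prems j by auto
  moreover have "multiplicity_prod (c p) ?m' = c p (k q) * multiplicity_prod (c p) m" for p
    using insert.prems j by (intro multiplicity_prod_add_fresh) auto
  ultimately have
    "(\<Sum>p\<in>D. w p * multiplicity_prod (c p) m * (\<Prod>q\<in>insert q Q. c p (k q) - a q))
       = (\<Sum>p\<in>D. w p * multiplicity_prod (c p) ?m' * ?R p) - a q * (\<Sum>p\<in>D. w p * multiplicity_prod (c p) m * ?R p)"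
    using insert.hyps by (simp add: sum_distrib_left algebra_simps flip: sum_subtractf)
  also have "\<dots> = 0"
    using insert.IH insert.prems \<open>0 \<notin># ?m'\<close> by simp
  finally show ?case .
qed

lemma multiplicity_prod_linear_independent:
  fixes c :: "'b \<Rightarrow> nat \<Rightarrow> 'a::idom"
  assumes "finite D"
    and separating: "\<And>p q. p \<in> D \<Longrightarrow> q \<in> D \<Longrightarrow> p \<noteq> q \<Longrightarrow> \<exists>k>0. c p k \<noteq> c q k"
    and zero: "\<And>m. 0 \<notin># m \<Longrightarrow> (\<Sum>p\<in>D. w p * multiplicity_prod (c p) m) = 0"
    and "p \<in> D"
  shows "w p = 0"
proof -
  obtain k where k: "\<And>q. q \<in> D - {p} \<Longrightarrow> k q > 0 \<and> c p (k q) \<noteq> c q (k q)"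
    using separating \<open>p \<in> D\<close> by (metis DiffE singletonI)
  let ?R = "\<lambda>p'. \<Prod>q\<in>D - {p}. c p' (k q) - c q (k q)"
  have "(\<Sum>p'\<in>D. w p' * multiplicity_prod (c p') {#} * ?R p') = 0"
    using k assms(1) by (intro sum_multiplicity_prod_filter_eq_0 zero) auto
  moreover have "?R p' = 0" if "p' \<in> D - {p}" for p'
    using that assms(1) by (intro prod_zero) auto
  ultimately have "w p * ?R p = 0"
    using assms(1,4) by (simp add: multiplicity_prod_def sum.remove)
  moreover have "?R p \<noteq> 0" using k assms(1) by (simp add: prod_zero_iff)
  ultimately show ?thesis by simp
qed

lemma Xbar_eq_sum_induced_subgraphs:
  assumes G: "simple_graph V E" and m0: "0 \<notin># m"
  shows "int (Xbar V E m) =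
           (\<Sum>W\<in>Pow V. (-1) ^ (card V - coeff (indep_poly W (induced_edges E W)) 1) *
              multiplicity_prod (\<lambda>k. int (coeff (indep_poly W (induced_edges E W)) k)) m)"
proof -
  have fin: "finite V" using G by (simp add: simple_graph_def)
  have "int (Xbar V E m) = (\<Sum>W\<in>Pow V. (-1) ^ (card V - card W) *
          (\<Prod>i\<in>set_mset m. int (card (indep_sets_of_size V E (count m i) \<inter> Pow W))))"
    unfolding Xbar_eq_card_independent_covers[OF fin m0]
    by (rule card_covering_families[OF fin finite_set_mset])
  also have "\<dots> = (\<Sum>W\<in>Pow V. (-1) ^ (card V - coeff (indep_poly W (induced_edges E W)) 1) *
              multiplicity_prod (\<lambda>k. int (coeff (indep_poly W (induced_edges E W)) k)) m)"
  proof (rule sum.cong[OF refl])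
    fix W assume "W \<in> Pow V"
    then have W: "W \<subseteq> V" "finite W" using fin finite_subset by auto
    have "\<And>v. {v} \<notin> induced_edges E W"
      using simple_graph_singleton_notin_edges[OF G] by (simp add: induced_edges_def)
    then have "coeff (indep_poly W (induced_edges E W)) 1 = card W"
      using W(2) coeff_indep_poly_1 by blast
    then show "(-1) ^ (card V - card W) *
          (\<Prod>i\<in>set_mset m. int (card (indep_sets_of_size V E (count m i) \<inter> Pow W))) =
        (-1) ^ (card V - coeff (indep_poly W (induced_edges E W)) 1) *
          multiplicity_prod (\<lambda>k. int (coeff (indep_poly W (induced_edges E W)) k)) m"
      by (simp add: multiplicity_prod_def coeff_indep_poly indep_sets_of_size_induced W)
  qed
  finally show ?thesis .
qed

text \<open>The sign (-1)^(|V| - |W|) of the Moebius formula, with |W| read off as the linear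
  coefficient of p.\<close>

definition signed_indep_count :: "'a set \<Rightarrow> 'a set set \<Rightarrow> nat poly \<Rightarrow> int" where
  "signed_indep_count V E p =
     (-1) ^ (card V - coeff p 1) * int (count (induced_indep_polys V E) p)"

lemma abs_signed_indep_count: "\<bar>signed_indep_count V E p\<bar> = int (count (induced_indep_polys V E) p)"
  by (simp add: signed_indep_count_def abs_mult power_abs)

lemma set_induced_indep_polys:
  "finite V \<Longrightarrow> set_mset (induced_indep_polys V E) = (\<lambda>W. indep_poly W (induced_edges E W)) ` Pow V"
  by (simp add: induced_indep_polys_def)

lemma coeff_0_of_induced_indep_polys:
  assumes "finite V" "p \<in># induced_indep_polys V E"
  shows "coeff p 0 = 1"
proof -
  from assms obtain W where "W \<subseteq> V" "p = indep_poly W (induced_edges E W)"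
    by (auto simp: set_induced_indep_polys)
  with assms(1) show ?thesis using coeff_indep_poly_0 finite_subset by metis
qed

lemma size_induced_indep_polys: "finite V \<Longrightarrow> size (induced_indep_polys V E) = 2 ^ card V"
  by (simp add: induced_indep_polys_def card_Pow)

lemma Xbar_eq_sum_signed_indep_count:
  assumes G: "simple_graph V E" and m0: "0 \<notin># m"
    and "finite D" and sub: "set_mset (induced_indep_polys V E) \<subseteq> D"
  shows "int (Xbar V E m) =
           (\<Sum>p\<in>D. signed_indep_count V E p * multiplicity_prod (\<lambda>k. int (coeff p k)) m)"
proof -
  let ?I = "\<lambda>W. indep_poly W (induced_edges E W)"
  let ?f = "\<lambda>p. (-1) ^ (card V - coeff p 1) * multiplicity_prod (\<lambda>k. int (coeff p k)) m :: int"
  have fin: "finite V" using G by (simp add: simple_graph_def)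
  have count: "count (induced_indep_polys V E) p = card {W \<in> Pow V. ?I W = p}" for p
    using fin by (simp add: induced_indep_polys_def count_image_mset' eq_commute)
  have "int (Xbar V E m) = (\<Sum>W\<in>Pow V. ?f (?I W))"
    by (rule Xbar_eq_sum_induced_subgraphs[OF G m0])
  also have "\<dots> = (\<Sum>p\<in>D. \<Sum>W\<in>{W \<in> Pow V. ?I W = p}. ?f (?I W))"
    using fin assms(3) sub by (intro sum.group[symmetric]) (auto simp: set_induced_indep_polys)
  also have "\<dots> = (\<Sum>p\<in>D. signed_indep_count V E p * multiplicity_prod (\<lambda>k. int (coeff p k)) m)"
    by (intro sum.cong refl) (simp add: count signed_indep_count_def)
  finally show ?thesis .
qed

lemma induced_indep_polys_eq_if_Xbar_eq:
  assumes G: "simple_graph V E" and G': "simple_graph V' E'" and X: "Xbar V E = Xbar V' E'"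
  shows "induced_indep_polys V E = induced_indep_polys V' E'"
proof -
  let ?P = "induced_indep_polys V E" and ?P' = "induced_indep_polys V' E'"
  have fin: "finite V" "finite V'" using G G' by (simp_all add: simple_graph_def)
  define D where "D = set_mset ?P \<union> set_mset ?P'"
  have "signed_indep_count V E p - signed_indep_count V' E' p = 0" if "p \<in> D" for p
  proof (rule multiplicity_prod_linear_independent[of D])
    show "\<exists>k>0. int (coeff p k) \<noteq> int (coeff q k)" if "p \<in> D" "q \<in> D" "p \<noteq> q" for p q
      using that coeff_0_of_induced_indep_polys[OF fin(1)] coeff_0_of_induced_indep_polys[OF fin(2)]
      by (metis D_def Un_iff gr0I poly_eqI of_nat_eq_iff)
    show "(\<Sum>p\<in>D. (signed_indep_count V E p - signed_indep_count V' E' p) *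
             multiplicity_prod (\<lambda>k. int (coeff p k)) m) = 0" if "0 \<notin># m" for m
      using Xbar_eq_sum_signed_indep_count[OF G that, of D] Xbar_eq_sum_signed_indep_count[OF G' that, of D] X
      by (simp add: D_def left_diff_distrib sum_subtractf)
  qed (use that D_def in simp_all)
  then have "count ?P p = count ?P' p" if "p \<in> D" for p
    using that abs_signed_indep_count by (metis eq_iff_diff_eq_0 of_nat_eq_iff)
  moreover have "count ?P p = count ?P' p" if "p \<notin> D" for p
    using that by (simp add: D_def not_in_iff)
  ultimately show ?thesis by (metis multiset_eqI)
qed

lemma Xbar_eq_if_induced_indep_polys_eq:
  assumes G: "simple_graph V E" and G': "simple_graph V' E'"
    and P: "induced_indep_polys V E = induced_indep_polys V' E'"
  shows "Xbar V E = Xbar V' E'"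
proof
  fix m
  have fin: "finite V" "finite V'" using G G' by (simp_all add: simple_graph_def)
  have "(2::nat) ^ card V = 2 ^ card V'"
    using P size_induced_indep_polys[OF fin(1)] size_induced_indep_polys[OF fin(2)] by metis
  with P have signed: "signed_indep_count V E = signed_indep_count V' E'"
    by (simp add: signed_indep_count_def fun_eq_iff)
  show "Xbar V E m = Xbar V' E' m"
  proof (cases "0 \<in># m")
    case True
    then show ?thesis using Xbar_eq_0_if_color_0 fin by metis
  next
    case False
    let ?D = "set_mset (induced_indep_polys V E)"
    have "int (Xbar V E m) = int (Xbar V' E' m)"
      using Xbar_eq_sum_signed_indep_count[OF G False, of ?D]
        Xbar_eq_sum_signed_indep_count[OF G' False, of ?D] P signed by simp
    then show ?thesis by simp
  qed
qed

theorem corollary1p6: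
  fixes V :: "'a set" and E :: "'a set set" and V' :: "'b set" and E' :: "'b set set"
  assumes "simple_graph V E" and "simple_graph V' E'"
  shows "Xbar V E = Xbar V' E' \<longleftrightarrow> induced_indep_polys V E = induced_indep_polys V' E'"
  using induced_indep_polys_eq_if_Xbar_eq[OF assms] Xbar_eq_if_induced_indep_polys_eq[OF assms]
  by blast

end
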